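(* Let $\ell>0$ and $\varepsilon\in(0,2)$. There exists a constant $C_p=C_p(\varepsilon,\ell)>0$ such that for every $\alpha\in[0,2-\varepsilon]$ and every $u\in H^1_\alpha(0,\ell)$, $$\int_0^\ell |u|^2\,dx\le C_p\int_0^\ell x^\alpha|\partial_x u|^2\,dx .$$
   Context: For $\ell>0$, the weighted spaces are: for $0\le\alpha<1$, $H^1_\alpha(0,\ell)=\{u\in L^2(0,\ell):\ \int_0^\ell x^\alpha|\partial_x u|^2\,dx<\infty,\ u(0)=u(\ell)=0\}$; for $1\le \alpha<2$, $H^1_\alpha(0,\ell)=\{u\in L^2(0,\ell):\ \int_0^\ell x^\alpha|\partial_x u|^2\,dx<\infty,\ u(\ell)=0\}$. *)

theory Defs
  imports "HOL-Analysis.Analysis"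
begin

text \<open>A function u in this space is represented by its
(locally) absolutely continuous representative on (0,l], together with its weak
derivative du: du is absolutely integrable on every compact [a,b] with 0 < a, b <= l,
and u b - u a is the integral of du over [a,b]. Moreover u is in L^2(0,l), the weighted
Dirichlet integral is finite, u l = 0, and for alpha < 1 also u 0 = 0 (as the limit from
the right at 0).\<close>

definition H1_alpha :: "real \<Rightarrow> real \<Rightarrow> (real \<Rightarrow> complex) \<Rightarrow> (real \<Rightarrow> complex) \<Rightarrow> bool" where
  "H1_alpha l \<alpha> u du \<longleftrightarrow>
     (\<forall>a b. 0 < a \<and> a \<le> b \<and> b \<le> l \<longrightarrow>
        du absolutely_integrable_on {a..b} \<and> (du has_integral (u b - u a)) {a..b}) \<and>
     (\<lambda>x. (cmod (u x))\<^sup>2) integrable_on {0<..<l} \<and>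
     (\<lambda>x. x powr \<alpha> * (cmod (du x))\<^sup>2) integrable_on {0<..<l} \<and>
     u l = 0 \<and>
     (\<alpha> < 1 \<longrightarrow> (u \<longlongrightarrow> 0) (at_right 0))"

end

theory Submission
  imports Defs
begin

text \<open>Since \<open>u l = 0\<close>, we have \<open>u x = - \<integral>\<^sub>x\<^sup>l du\<close>, and the weighted Cauchy-Schwarz
inequality gives \<open>\<bar>u x\<bar>\<^sup>2 \<le> (\<integral>\<^sub>x\<^sup>l t\<^sup>-\<^sup>\<alpha> dt) \<cdot> \<integral>\<^sub>0\<^sup>l t\<^sup>\<alpha> \<bar>du\<bar>\<^sup>2\<close>. For \<open>\<alpha> \<le> \<gamma>\<close> with
\<open>1 < \<gamma> < 2\<close> the first factor is at most \<open>x\<^sup>1\<^sup>-\<^sup>\<gamma> / (\<gamma> - 1) + l\<close>, which is integrable over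
\<open>(0, l)\<close> because \<open>1 - \<gamma> > -1\<close>. Taking \<open>\<gamma> = max (2 - \<epsilon>) (3/2)\<close> makes the resulting
constant independent of \<open>\<alpha> \<in> [0, 2 - \<epsilon>]\<close>.\<close>

lemma sq_le_mult_if_le_amgm:
  fixes c A B :: real
  assumes "0 \<le> c" "0 \<le> A" "0 \<le> B" and le: "\<And>s. 0 < s \<Longrightarrow> c \<le> (s * A + B / s) / 2"
  shows "c\<^sup>2 \<le> A * B"
proof (cases "c = 0")
  case True
  then show ?thesis using assms by simp
next
  case False
  then have c: "0 < c" using assms by simp
  show ?thesis
  proof (cases "A = 0")
    case True
    have "c \<le> B * c / (2 * (B + 1))"
      using le[of "(B + 1) / c"] c \<open>0 \<le> B\<close> True by (simp add: mult.commute)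
    also have "\<dots> < c"
      using c \<open>0 \<le> B\<close> by (auto simp: field_simps intro!: add_nonneg_pos)
    finally show ?thesis by simp
  next
    case False
    then have "c \<le> (c + A * B / c) / 2"
      using le[of "c / A"] c \<open>0 \<le> A\<close> by (simp add: mult.commute)
    then show ?thesis
      using c by (simp add: field_simps power2_eq_square)
  qed
qed

lemma norm_integral_squared_le_weighted:
  fixes f :: "'n::euclidean_space \<Rightarrow> 'a::banach" and w :: "'n \<Rightarrow> real"
  assumes f: "f integrable_on S"
    and inv_w: "(\<lambda>x. inverse (w x)) integrable_on S"
    and wf: "(\<lambda>x. w x * (norm (f x))\<^sup>2) integrable_on S"
    and w_pos: "\<And>x. x \<in> S \<Longrightarrow> 0 < w x"
  shows "(norm (integral S f))\<^sup>2
           \<le> integral S (\<lambda>x. inverse (w x)) * integral S (\<lambda>x. w x * (norm (f x))\<^sup>2)"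
proof (rule sq_le_mult_if_le_amgm)
  show "0 \<le> integral S (\<lambda>x. inverse (w x))"
    using inv_w w_pos by (intro integral_nonneg) (auto simp: less_imp_le)
  show "0 \<le> integral S (\<lambda>x. w x * (norm (f x))\<^sup>2)"
    using wf w_pos by (intro integral_nonneg) (auto simp: less_imp_le)
  fix s :: real
  assume s: "0 < s"
  have "norm (integral S f)
          \<le> integral S (\<lambda>x. (s * inverse (w x) + w x * (norm (f x))\<^sup>2 / s) / 2)"
  proof (rule integral_norm_bound_integral[OF f])
    show "(\<lambda>x. (s * inverse (w x) + w x * (norm (f x))\<^sup>2 / s) / 2) integrable_on S"
      by (intro integrable_on_divide integrable_add integrable_on_mult_right inv_w wf)
    fix x
    assume "x \<in> S"
    then have wx: "0 < w x" by (rule w_pos)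
    \<comment> \<open>AM-GM: \<open>2 s w |f| \<le> s\<^sup>2 + w\<^sup>2 |f|\<^sup>2\<close>\<close>
    have "0 \<le> (s - w x * norm (f x))\<^sup>2" by simp
    then show "norm (f x) \<le> (s * inverse (w x) + w x * (norm (f x))\<^sup>2 / s) / 2"
      using wx s by (simp add: field_simps power2_eq_square)
  qed
  also have "\<dots> = (s * integral S (\<lambda>x. inverse (w x))
                    + integral S (\<lambda>x. w x * (norm (f x))\<^sup>2) / s) / 2"
    using inv_w wf by (simp add: integral_add integrable_on_divide integrable_on_mult_right)
  finally show "norm (integral S f) \<le> (s * integral S (\<lambda>x. inverse (w x))
                    + integral S (\<lambda>x. w x * (norm (f x))\<^sup>2) / s) / 2" .
qed simp

lemma has_integral_powr_Icc:
  fixes p a b :: real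
  assumes "p \<noteq> -1" "0 < a" "a \<le> b"
  shows "((\<lambda>t. t powr p) has_integral (b powr (p + 1) - a powr (p + 1)) / (p + 1)) {a..b}"
proof -
  have "((\<lambda>t. t powr p) has_integral b powr (p + 1) / (p + 1) - a powr (p + 1) / (p + 1)) {a..b}"
  proof (rule fundamental_theorem_of_calculus[OF \<open>a \<le> b\<close>])
    fix t
    assume "t \<in> {a..b}"
    then have "0 < t" using assms by simp
    have "((\<lambda>t. t powr (p + 1) / (p + 1)) has_real_derivative t powr p) (at t)"
      using DERIV_cdivide[OF has_real_derivative_powr[OF \<open>0 < t\<close>, of "p + 1"], of "p + 1"]
        \<open>p \<noteq> -1\<close> by (simp add: add_eq_0_iff)
    then show "((\<lambda>t. t powr (p + 1) / (p + 1)) has_vector_derivative t powr p)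
                 (at t within {a..b})"
      by (simp add: has_real_derivative_iff_has_vector_derivative has_vector_derivative_at_within)
  qed
  then show ?thesis by (simp add: diff_divide_distrib)
qed

lemma integral_powr_uminus_le:
  fixes x l \<alpha> \<gamma> :: real
  assumes "0 < x" "x \<le> l" "0 \<le> \<alpha>" "\<alpha> \<le> \<gamma>" "1 < \<gamma>"
  shows "integral {x..l} (\<lambda>t. t powr - \<alpha>) \<le> x powr (1 - \<gamma>) / (\<gamma> - 1) + l"
proof -
  have powr_\<gamma>: "((\<lambda>t. t powr - \<gamma>) has_integral (x powr (1 - \<gamma>) - l powr (1 - \<gamma>)) / (\<gamma> - 1)) {x..l}"
  proof -
    have "(l powr (1 - \<gamma>) - x powr (1 - \<gamma>)) / (1 - \<gamma>)
            = (x powr (1 - \<gamma>) - l powr (1 - \<gamma>)) / (\<gamma> - 1)"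
      by (metis minus_diff_eq minus_divide_divide)
    then show ?thesis
      using has_integral_powr_Icc[of "- \<gamma>" x l] assms by simp
  qed
  have one: "((\<lambda>t. 1) has_integral l - x) {x..l}"
    using has_integral_const_real[of "1::real" x l] assms by simp
  have "integral {x..l} (\<lambda>t. t powr - \<alpha>) \<le> integral {x..l} (\<lambda>t. t powr - \<gamma> + 1)"
  proof (rule integral_le)
    show "(\<lambda>t. t powr - \<alpha>) integrable_on {x..l}"
      using assms by (intro integrable_continuous_interval) (auto intro!: continuous_intros)
    show "(\<lambda>t. t powr - \<gamma> + 1) integrable_on {x..l}"
      using has_integral_add[OF powr_\<gamma> one] by blast
    fix t
    assume "t \<in> {x..l}"
    then have "0 < t" using assms by simp
    show "t powr - \<alpha> \<le> t powr - \<gamma> + 1"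
    proof (cases "t \<le> 1")
      case True
      then have "t powr - \<alpha> \<le> t powr - \<gamma>"
        using powr_mono'[of "- \<gamma>" "- \<alpha>" t] \<open>0 < t\<close> assms by simp
      then show ?thesis by simp
    next
      case False
      then have "t powr - \<alpha> \<le> 1"
        using powr_mono[of "- \<alpha>" 0 t] assms by simp
      then show ?thesis
        using powr_ge_zero[of t "- \<gamma>"] by linarith
    qed
  qed
  also have "\<dots> = (x powr (1 - \<gamma>) - l powr (1 - \<gamma>)) / (\<gamma> - 1) + (l - x)"
    using has_integral_add[OF powr_\<gamma> one] by (simp add: integral_unique)
  also have "\<dots> \<le> x powr (1 - \<gamma>) / (\<gamma> - 1) + l"
  proof -
    have "0 \<le> l powr (1 - \<gamma>) / (\<gamma> - 1)"
      using assms by simp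
    then show ?thesis
      unfolding diff_divide_distrib using assms by linarith
  qed
  finally show ?thesis .
qed

lemma H1_alpha_norm_squared_le:
  fixes x l \<alpha> \<gamma> :: real and u du :: "real \<Rightarrow> complex"
  assumes x: "0 < x" "x < l" and \<gamma>: "1 < \<gamma>" and \<alpha>: "0 \<le> \<alpha>" "\<alpha> \<le> \<gamma>"
    and H: "H1_alpha l \<alpha> u du"
  shows "(cmod (u x))\<^sup>2
           \<le> (x powr (1 - \<gamma>) / (\<gamma> - 1) + l) * integral {0<..<l} (\<lambda>t. t powr \<alpha> * (cmod (du t))\<^sup>2)"
proof -
  let ?w = "\<lambda>t. t powr \<alpha> * (cmod (du t))\<^sup>2"
  have "(du has_integral u l - u x) {x..l}"
    using H x unfolding H1_alpha_def by (meson less_imp_le order_refl)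
  then have du: "(du has_integral - u x) {x..l}"
    using H by (simp add: H1_alpha_def)
  have w_Icc: "?w integrable_on {0..l}"
    using H by (simp add: H1_alpha_def integrable_on_Icc_iff_Ioo)
  then have w_sub: "?w integrable_on {x..l}"
    by (rule integrable_on_subinterval) (use x in auto)
  have inv_int: "(\<lambda>t. inverse (t powr \<alpha>)) integrable_on {x..l}"
    using x by (intro integrable_continuous_interval) (auto intro!: continuous_intros)
  have "(cmod (u x))\<^sup>2 = (norm (integral {x..l} du))\<^sup>2"
    using integral_unique[OF du] by simp
  also have "\<dots> \<le> integral {x..l} (\<lambda>t. inverse (t powr \<alpha>)) * integral {x..l} ?w"
    using norm_integral_squared_le_weighted[OF has_integral_integrable[OF du] inv_int w_sub] x
    by simp
  also have "\<dots> \<le> (x powr (1 - \<gamma>) / (\<gamma> - 1) + l) * integral {0<..<l} ?w"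
  proof (rule mult_mono)
    show "integral {x..l} (\<lambda>t. inverse (t powr \<alpha>)) \<le> x powr (1 - \<gamma>) / (\<gamma> - 1) + l"
      using integral_powr_uminus_le[of x l \<alpha> \<gamma>] x \<gamma> \<alpha> by (simp add: powr_minus)
    have "integral {x..l} ?w \<le> integral {0..l} ?w"
      using x w_sub w_Icc by (intro integral_subset_le) auto
    then show "integral {x..l} ?w \<le> integral {0<..<l} ?w"
      by (simp add: integral_open_interval_real)
    show "0 \<le> x powr (1 - \<gamma>) / (\<gamma> - 1) + l"
      using x \<gamma> by simp
    show "0 \<le> integral {x..l} ?w"
      using w_sub by (intro integral_nonneg) auto
  qed
  finally show ?thesis .
qed

lemma H1_alpha_integral_le:
  fixes l \<alpha> \<gamma> :: real and u du :: "real \<Rightarrow> complex"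
  assumes l: "0 < l" and \<gamma>: "1 < \<gamma>" "\<gamma> < 2" and \<alpha>: "0 \<le> \<alpha>" "\<alpha> \<le> \<gamma>"
    and H: "H1_alpha l \<alpha> u du"
  shows "integral {0<..<l} (\<lambda>x. (cmod (u x))\<^sup>2)
           \<le> (l powr (2 - \<gamma>) / ((2 - \<gamma>) * (\<gamma> - 1)) + l\<^sup>2)
               * integral {0<..<l} (\<lambda>x. x powr \<alpha> * (cmod (du x))\<^sup>2)"
    (is "_ \<le> ?C * ?W")
proof -
  have "((\<lambda>x. x powr (1 - \<gamma>)) has_integral l powr (2 - \<gamma>) / (2 - \<gamma>)) {0..l}"
    using has_integral_powr_from_0[of "1 - \<gamma>" l] l \<gamma> by (simp add: diff_add_eq_diff_diff_swap)
  from has_integral_add[OF has_integral_divide[OF this, of "\<gamma> - 1"]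
                           has_integral_const_real[of l 0 l]]
  have "((\<lambda>x. (x powr (1 - \<gamma>) / (\<gamma> - 1) + l) * ?W) has_integral ?C * ?W) {0<..<l}"
    using l by (intro has_integral_mult_left)
               (simp add: has_integral_Icc_iff_Ioo power2_eq_square mult.commute)
  moreover have "(\<lambda>x. (cmod (u x))\<^sup>2) integrable_on {0<..<l}"
    using H by (simp add: H1_alpha_def)
  ultimately have "integral {0<..<l} (\<lambda>x. (cmod (u x))\<^sup>2)
                     \<le> integral {0<..<l} (\<lambda>x. (x powr (1 - \<gamma>) / (\<gamma> - 1) + l) * ?W)"
    using H1_alpha_norm_squared_le[OF _ _ \<gamma>(1) \<alpha> H] by (intro integral_le) auto
  also have "\<dots> = ?C * ?W"
    using \<open>(_ has_integral ?C * ?W) _\<close> by (rule integral_unique)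
  finally show ?thesis .
qed

theorem lemma2p2:
  fixes l \<epsilon> :: real
  assumes "l > 0" and "0 < \<epsilon>" and "\<epsilon> < 2"
  shows "\<exists>C>0. \<forall>\<alpha> u du. 0 \<le> \<alpha> \<and> \<alpha> \<le> 2 - \<epsilon> \<and> H1_alpha l \<alpha> u du \<longrightarrow>
           integral {0<..<l} (\<lambda>x. (cmod (u x))\<^sup>2)
             \<le> C * integral {0<..<l} (\<lambda>x. x powr \<alpha> * (cmod (du x))\<^sup>2)"
proof -
  define \<gamma> :: real where "\<gamma> = max (2 - \<epsilon>) (3/2)"
  have \<gamma>: "1 < \<gamma>" "\<gamma> < 2" "2 - \<epsilon> \<le> \<gamma>"
    using assms unfolding \<gamma>_def by auto
  have "0 < l powr (2 - \<gamma>) / ((2 - \<gamma>) * (\<gamma> - 1)) + l\<^sup>2"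
    using \<open>l > 0\<close> \<gamma> by (intro add_nonneg_pos) auto
  with H1_alpha_integral_le[OF \<open>l > 0\<close> \<gamma>(1,2)] \<gamma>(3) show ?thesis
    by (meson order_trans)
qed

end
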